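(* Let $(G,\mathcal{T},(A^\circ,B^\circ),k)$ be a maximal Terminal Separation instance. If $A$ is a terminal-free $A^\circ$-extension with $d(A)-d(A^\circ)\le 0$, then $A=A^\circ$.
   Context: Graphs may have multiple edges but no loops; $d(A)$ is the number of edges with exactly one endpoint in $A$. For a family $\mathcal{T}$ of pairwise disjoint vertex pairs (terminals are their vertices), a terminal separation is a pair $(A,B)$ of disjoint vertex sets such that each pair in $\mathcal{T}$ either has one vertex in $A$ and one in $B$ or is disjoint from $A\cup B$; $(A',B')$ extends $(A,B)$ if $A\subseteq A'$, $B\subseteq B'$; cost $c(A,B)=(d(A)+d(B))/2$; $(A,B)$ is maximal if every other terminal separation extending it has strictly larger cost. A Terminal Separation instance $(G,\mathcal{T},(A^\circ,B^\circ),k)$ has every terminal of degree at most one and $(A^\circ,B^\circ)$ a terminal separation; it is maximal if $(A^\circ,B^\circ)$ is maximal. A set $A$ is an $A^\circ$-extension if $A^\circ\subseteq A\subseteq V(G)\setminus B^\circ$; it is terminal-free if $A\setminus A^\circ$ contains no terminal. *)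

theory Defs
  imports Complex_Main
begin

text \<open>Parallel edges are distinct edge identifiers with the same endpoints.\<close>

definition multigraph :: "'v set \<Rightarrow> 'e set \<Rightarrow> ('e \<Rightarrow> 'v \<times> 'v) \<Rightarrow> bool" where
  "multigraph V E ends \<longleftrightarrow> finite V \<and> finite E \<and>
     (\<forall>e\<in>E. fst (ends e) \<in> V \<and> snd (ends e) \<in> V \<and> fst (ends e) \<noteq> snd (ends e))"

definition dcut :: "'e set \<Rightarrow> ('e \<Rightarrow> 'v \<times> 'v) \<Rightarrow> 'v set \<Rightarrow> nat" where
  "dcut E ends A = card {e\<in>E. (fst (ends e) \<in> A) \<noteq> (snd (ends e) \<in> A)}"

definition degree :: "'e set \<Rightarrow> ('e \<Rightarrow> 'v \<times> 'v) \<Rightarrow> 'v \<Rightarrow> nat" where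
  "degree E ends v = card {e\<in>E. fst (ends e) = v \<or> snd (ends e) = v}"

definition pair_family :: "'v set \<Rightarrow> 'v set set \<Rightarrow> bool" where
  "pair_family V T \<longleftrightarrow> (\<forall>p\<in>T. p \<subseteq> V \<and> card p = 2) \<and>
     (\<forall>p\<in>T. \<forall>q\<in>T. p \<noteq> q \<longrightarrow> p \<inter> q = {})"

definition terminals :: "'v set set \<Rightarrow> 'v set" where
  "terminals T = \<Union>T"

definition terminal_sep :: "'v set \<Rightarrow> 'v set set \<Rightarrow> 'v set \<Rightarrow> 'v set \<Rightarrow> bool" where
  "terminal_sep V T A B \<longleftrightarrow> A \<subseteq> V \<and> B \<subseteq> V \<and> A \<inter> B = {} \<and>
     (\<forall>p\<in>T. (card (p \<inter> A) = 1 \<and> card (p \<inter> B) = 1) \<or> p \<inter> (A \<union> B) = {})"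

definition sep_cost :: "'e set \<Rightarrow> ('e \<Rightarrow> 'v \<times> 'v) \<Rightarrow> 'v set \<Rightarrow> 'v set \<Rightarrow> real" where
  "sep_cost E ends A B = (real (dcut E ends A) + real (dcut E ends B)) / 2"

definition maximal_sep :: "'v set \<Rightarrow> 'e set \<Rightarrow> ('e \<Rightarrow> 'v \<times> 'v) \<Rightarrow> 'v set set \<Rightarrow> 'v set \<Rightarrow> 'v set \<Rightarrow> bool" where
  "maximal_sep V E ends T A B \<longleftrightarrow> terminal_sep V T A B \<and>
     (\<forall>A' B'. terminal_sep V T A' B' \<and> A \<subseteq> A' \<and> B \<subseteq> B' \<and> (A', B') \<noteq> (A, B) \<longrightarrow>
        sep_cost E ends A' B' > sep_cost E ends A B)"

definition TS_instance :: "'v set \<Rightarrow> 'e set \<Rightarrow> ('e \<Rightarrow> 'v \<times> 'v) \<Rightarrow> 'v set set \<Rightarrow> 'v set \<Rightarrow> 'v set \<Rightarrow> nat \<Rightarrow> bool" where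
  "TS_instance V E ends T A0 B0 k \<longleftrightarrow> multigraph V E ends \<and> pair_family V T \<and>
     (\<forall>t\<in>terminals T. degree E ends t \<le> 1) \<and> terminal_sep V T A0 B0"

definition maximal_TS_instance :: "'v set \<Rightarrow> 'e set \<Rightarrow> ('e \<Rightarrow> 'v \<times> 'v) \<Rightarrow> 'v set set \<Rightarrow> 'v set \<Rightarrow> 'v set \<Rightarrow> nat \<Rightarrow> bool" where
  "maximal_TS_instance V E ends T A0 B0 k \<longleftrightarrow> TS_instance V E ends T A0 B0 k \<and> maximal_sep V E ends T A0 B0"

definition extension :: "'v set \<Rightarrow> 'v set \<Rightarrow> 'v set \<Rightarrow> 'v set \<Rightarrow> bool" where
  "extension V A0 B0 A \<longleftrightarrow> A0 \<subseteq> A \<and> A \<subseteq> V - B0"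

definition terminal_free :: "'v set set \<Rightarrow> 'v set \<Rightarrow> 'v set \<Rightarrow> bool" where
  "terminal_free T A0 A \<longleftrightarrow> (A - A0) \<inter> terminals T = {}"

end

theory Submission
  imports Defs
begin

text \<open>A terminal-free extension A of A0 meets every terminal pair exactly as A0 does, so
  (A, B0) is again a terminal separation extending (A0, B0). Maximality of (A0, B0) then
  forces d(A) > d(A0) unless A = A0.\<close>

lemma terminal_sep_terminal_free_extension:
  assumes "terminal_sep V T A0 B0" and "extension V A0 B0 A" and "terminal_free T A0 A"
  shows "terminal_sep V T A B0"
proof -
  have ext: "A0 \<subseteq> A" "A \<subseteq> V - B0"
    using assms(2) unfolding extension_def by auto
  have same_trace: "p \<inter> A = p \<inter> A0" if "p \<in> T" for p
    using assms(3) that ext unfolding terminal_free_def terminals_def by blast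
  then have "p \<inter> (A \<union> B0) = p \<inter> (A0 \<union> B0)" if "p \<in> T" for p
    using that by blast
  with assms(1) ext same_trace show ?thesis
    unfolding terminal_sep_def by auto
qed

lemma maximal_sep_dcut_less:
  assumes "maximal_sep V E ends T A0 B0" and "terminal_sep V T A B0"
    and "A0 \<subseteq> A" and "A \<noteq> A0"
  shows "dcut E ends A0 < dcut E ends A"
proof -
  have "sep_cost E ends A0 B0 < sep_cost E ends A B0"
    using assms unfolding maximal_sep_def by auto
  then show ?thesis
    unfolding sep_cost_def by simp
qed

theorem lemma4p2:
  fixes V :: "'v set" and E :: "'e set" and ends :: "'e \<Rightarrow> 'v \<times> 'v"
    and T :: "'v set set" and A0 B0 A :: "'v set" and k :: nat
  assumes "maximal_TS_instance V E ends T A0 B0 k"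
    and "extension V A0 B0 A"
    and "terminal_free T A0 A"
    and "int (dcut E ends A) - int (dcut E ends A0) \<le> 0"
  shows "A = A0"
proof (rule ccontr)
  assume "A \<noteq> A0"
  have maximal: "maximal_sep V E ends T A0 B0"
    using assms(1) unfolding maximal_TS_instance_def by simp
  then have "terminal_sep V T A B0"
    using assms(2,3) terminal_sep_terminal_free_extension
    unfolding maximal_sep_def by blast
  moreover have "A0 \<subseteq> A"
    using assms(2) unfolding extension_def by simp
  ultimately have "dcut E ends A0 < dcut E ends A"
    using maximal_sep_dcut_less[OF maximal] \<open>A \<noteq> A0\<close> by blast
  with assms(4) show False by simp
qed

end
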